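(* If $G$ is a finite group, then there is a closed subgroup $H_0$ of $G^\omega$ such that for every closed subgroup $H$ of $G^\omega$ there is a continuous group homomorphism $\varphi:G^\omega\to G^\omega$ with $\varphi^{-1}(H_0)=H$.
   Context: $G$ carries the discrete topology and $G^\omega$ the product topology. *)

theory Defs
  imports "HOL-Analysis.Analysis" "HOL-Algebra.Product_Groups"
begin

definition omega_power_group :: "('a, 'b) monoid_scheme \<Rightarrow> (nat \<Rightarrow> 'a) monoid" where
  "omega_power_group G = product_group (UNIV :: nat set) (\<lambda>_. G)"

definition omega_power_topology :: "('a, 'b) monoid_scheme \<Rightarrow> (nat \<Rightarrow> 'a) topology" where
  "omega_power_topology G = product_topology (\<lambda>_. discrete_topology (carrier G)) (UNIV :: nat set)"

end

theory Submission
  imports Defs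
begin

text \<open>Split the coordinates of \<open>G\<^sup>\<omega>\<close> into countably many blocks, indexed by an
  enumeration of all pairs \<open>(n, K)\<close> with \<open>K\<close> a subgroup of the finite group of
  length-\<open>n\<close> truncations. The universal subgroup \<open>H\<^sub>0\<close> requires the first \<open>n\<close> entries of
  block \<open>(n, K)\<close> to lie in \<open>K\<close>; it is an intersection of preimages of finite subgroups
  under continuous homomorphisms, hence a closed subgroup. Given a closed subgroup \<open>H\<close>,
  the map \<open>\<phi>\<close> copies the first \<open>n\<close> coordinates of \<open>x\<close> into the block of
  \<open>(n, truncation of H)\<close> and puts \<open>\<one>\<close> everywhere else. Then \<open>\<phi> x \<in> H\<^sub>0\<close> says that
  every truncation of \<open>x\<close> is a truncation of an element of \<open>H\<close>, which for closed \<open>H\<close>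
  means \<open>x \<in> H\<close>.\<close>

lemma carrier_omega_power_group:
  "carrier (omega_power_group G) = {x. \<forall>i. x i \<in> carrier G}"
  by (auto simp: omega_power_group_def PiE_def extensional_def)

lemma mult_omega_power_group:
  "x \<otimes>\<^bsub>omega_power_group G\<^esub> y = (\<lambda>i. x i \<otimes>\<^bsub>G\<^esub> y i)"
  by (simp add: omega_power_group_def restrict_def)

lemma one_omega_power_group: "\<one>\<^bsub>omega_power_group G\<^esub> = (\<lambda>i. \<one>\<^bsub>G\<^esub>)"
  by (simp add: omega_power_group_def restrict_def)

lemma group_omega_power_group: "group G \<Longrightarrow> group (omega_power_group G)"
  by (simp add: omega_power_group_def)

lemma topspace_omega_power_topology:
  "topspace (omega_power_topology G) = carrier (omega_power_group G)"
  by (simp add: omega_power_topology_def omega_power_group_def)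

lemma Hausdorff_space_omega_power_topology: "Hausdorff_space (omega_power_topology G)"
  by (simp add: omega_power_topology_def Hausdorff_space_product_topology)

lemma subgroup_vimage:
  assumes "group_hom A B h" "subgroup K B"
  shows "subgroup {x \<in> carrier A. h x \<in> K} A"
proof -
  interpret group_hom A B h by fact
  interpret K: subgroup K B by fact
  show ?thesis
    by unfold_locales auto
qed

lemma omega_power_closedin_prefix_limit:
  assumes H: "closedin (omega_power_topology G) H" and x: "x \<in> carrier (omega_power_group G)"
    and approx: "\<And>n. \<exists>h\<in>H. \<forall>i<n. h i = x i"
  shows "x \<in> H"
proof (rule ccontr)
  assume "x \<notin> H"
  let ?D = "\<lambda>_::nat. discrete_topology (carrier G)"
  have "openin (product_topology ?D UNIV) (topspace (product_topology ?D UNIV) - H)"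
    using H unfolding omega_power_topology_def closedin_def by blast
  moreover have "x \<in> topspace (product_topology ?D UNIV) - H"
    using x \<open>x \<notin> H\<close> topspace_omega_power_topology[of G]
    unfolding omega_power_topology_def by blast
  ultimately have "\<exists>X. x \<in> (\<Pi>\<^sub>E i\<in>UNIV. X i) \<and> (\<forall>i. openin (?D i) (X i)) \<and>
      finite {i. X i \<noteq> topspace (?D i)} \<and> (\<Pi>\<^sub>E i\<in>UNIV. X i) \<subseteq> topspace (product_topology ?D UNIV) - H"
    by (rule product_topology_open_contains_basis)
  then obtain X where X: "x \<in> (\<Pi>\<^sub>E i\<in>UNIV. X i)" "finite {i. X i \<noteq> carrier G}"
      "(\<Pi>\<^sub>E i\<in>UNIV. X i) \<subseteq> topspace (product_topology ?D UNIV) - H"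
    unfolding topspace_discrete_topology by blast
  obtain n where n: "\<And>i. X i \<noteq> carrier G \<Longrightarrow> i < n"
    using X(2) finite_nat_set_iff_bounded by auto
  obtain h where h: "h \<in> H" "\<And>i. i < n \<Longrightarrow> h i = x i"
    using approx by blast
  have "h \<in> carrier (omega_power_group G)"
    using h(1) closedin_subset[OF H] topspace_omega_power_topology by blast
  then have "h i \<in> X i" for i
  proof (cases "i < n")
    case True
    then show ?thesis using X(1) h(2) by (simp add: PiE_iff)
  next
    case False
    then have "X i = carrier G" using n by blast
    then show ?thesis using \<open>h \<in> carrier (omega_power_group G)\<close>
      by (simp add: carrier_omega_power_group)
  qed
  then show False
    using X(3) h(1) by blast
qed

definition reindex :: "'a \<Rightarrow> (nat \<Rightarrow> nat option) \<Rightarrow> (nat \<Rightarrow> 'a) \<Rightarrow> nat \<Rightarrow> 'a" where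
  "reindex d s x = (\<lambda>i. case s i of None \<Rightarrow> d | Some j \<Rightarrow> x j)"

lemma reindex_group_hom:
  assumes "group G"
  shows "group_hom (omega_power_group G) (omega_power_group G) (reindex \<one>\<^bsub>G\<^esub> s)"
proof -
  interpret group G by fact
  have "reindex \<one>\<^bsub>G\<^esub> s \<in> hom (omega_power_group G) (omega_power_group G)"
    by (rule homI)
      (auto simp: carrier_omega_power_group mult_omega_power_group reindex_def split: option.splits)
  then show ?thesis
    using group_omega_power_group[OF assms] by (simp add: group_hom_def group_hom_axioms_def)
qed

lemma continuous_map_reindex:
  assumes "\<one>\<^bsub>G\<^esub> \<in> carrier G"
  shows "continuous_map (omega_power_topology G) (omega_power_topology G) (reindex \<one>\<^bsub>G\<^esub> s)"
  unfolding omega_power_topology_def continuous_map_componentwise_UNIV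
proof
  fix k
  show "continuous_map (product_topology (\<lambda>_. discrete_topology (carrier G)) UNIV)
          (discrete_topology (carrier G)) (\<lambda>x. reindex \<one>\<^bsub>G\<^esub> s x k)"
    using assms continuous_map_product_projection[of _ UNIV "\<lambda>_. discrete_topology (carrier G)"]
    by (cases "s k") (auto simp: reindex_def)
qed

definition truncation :: "('a, 'b) monoid_scheme \<Rightarrow> nat \<Rightarrow> (nat \<Rightarrow> 'a) \<Rightarrow> nat \<Rightarrow> 'a" where
  "truncation G n = reindex \<one>\<^bsub>G\<^esub> (\<lambda>i. if i < n then Some i else None)"

definition truncated_block :: "('a, 'b) monoid_scheme \<Rightarrow> nat \<Rightarrow> nat \<Rightarrow> (nat \<Rightarrow> 'a) \<Rightarrow> nat \<Rightarrow> 'a" where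
  "truncated_block G k n = reindex \<one>\<^bsub>G\<^esub> (\<lambda>i. if i < n then Some (prod_encode (k, i)) else None)"

lemma truncation_apply: "truncation G n x i = (if i < n then x i else \<one>\<^bsub>G\<^esub>)"
  by (simp add: truncation_def reindex_def)

lemma truncated_block_apply:
  "truncated_block G k n y i = (if i < n then y (prod_encode (k, i)) else \<one>\<^bsub>G\<^esub>)"
  by (simp add: truncated_block_def reindex_def)

lemma finite_truncation_image:
  assumes "finite (carrier G)"
  shows "finite (truncation G n ` carrier (omega_power_group G))"
proof (rule finite_subset)
  show "truncation G n ` carrier (omega_power_group G)
          \<subseteq> truncation G n ` (\<Pi>\<^sub>E i\<in>{..<n}. carrier G)"
  proof
    fix y assume "y \<in> truncation G n ` carrier (omega_power_group G)"
    then obtain x where "x \<in> carrier (omega_power_group G)" "y = truncation G n x"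
      by blast
    then have "restrict x {..<n} \<in> (\<Pi>\<^sub>E i\<in>{..<n}. carrier G)"
        "y = truncation G n (restrict x {..<n})"
      by (auto simp: carrier_omega_power_group truncation_apply)
    then show "y \<in> truncation G n ` (\<Pi>\<^sub>E i\<in>{..<n}. carrier G)"
      by blast
  qed
  show "finite (truncation G n ` (\<Pi>\<^sub>E i\<in>{..<n}. carrier G))"
    using assms by (simp add: finite_PiE)
qed

definition truncation_patterns :: "('a, 'b) monoid_scheme \<Rightarrow> (nat \<times> (nat \<Rightarrow> 'a) set) set" where
  "truncation_patterns G = {(n, K). subgroup K (omega_power_group G) \<and>
                              K \<subseteq> truncation G n ` carrier (omega_power_group G)}"

lemma truncation_patternsD:
  assumes "p \<in> truncation_patterns G"
  shows "subgroup (snd p) (omega_power_group G)"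
    and "snd p \<subseteq> truncation G (fst p) ` carrier (omega_power_group G)"
  using assms by (auto simp: truncation_patterns_def)

lemma truncation_image_in_truncation_patterns:
  assumes "group G" "subgroup H (omega_power_group G)"
  shows "(n, truncation G n ` H) \<in> truncation_patterns G"
  using group_hom.subgroup_img_is_subgroup[OF reindex_group_hom[OF assms(1)] assms(2)]
    subgroup.subset[OF assms(2)]
  by (auto simp: truncation_patterns_def truncation_def)

lemma countable_truncation_patterns:
  assumes "finite (carrier G)"
  shows "countable (truncation_patterns G)"
proof (rule countable_subset)
  show "truncation_patterns G \<subseteq> (SIGMA n:UNIV. Pow (truncation G n ` carrier (omega_power_group G)))"
    by (auto simp: truncation_patterns_def)
  show "countable (SIGMA n:UNIV. Pow (truncation G n ` carrier (omega_power_group G)))"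
    using finite_truncation_image[OF assms] by (auto intro: countable_SIGMA countable_finite)
qed

definition universal_subgroup ::
    "('a, 'b) monoid_scheme \<Rightarrow> (nat \<Rightarrow> nat \<times> (nat \<Rightarrow> 'a) set) \<Rightarrow> (nat \<Rightarrow> 'a) set" where
  "universal_subgroup G e = {y \<in> carrier (omega_power_group G).
                              \<forall>k. truncated_block G k (fst (e k)) y \<in> snd (e k)}"

lemma universal_subgroup_eq_Inter:
  "universal_subgroup G e = (\<Inter>k. {y \<in> carrier (omega_power_group G).
                                       truncated_block G k (fst (e k)) y \<in> snd (e k)})"
  by (auto simp: universal_subgroup_def)

lemma subgroup_universal_subgroup:
  assumes "group G" "range e \<subseteq> truncation_patterns G"
  shows "subgroup (universal_subgroup G e) (omega_power_group G)"
  unfolding universal_subgroup_eq_Inter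
proof (rule subgroup_Inter)
  fix S assume "S \<in> range (\<lambda>k. {y \<in> carrier (omega_power_group G).
                                 truncated_block G k (fst (e k)) y \<in> snd (e k)})"
  then obtain k where S: "S = {y \<in> carrier (omega_power_group G).
                                 truncated_block G k (fst (e k)) y \<in> snd (e k)}"
    by blast
  have "subgroup (snd (e k)) (omega_power_group G)"
    using truncation_patternsD(1) assms(2) by blast
  then show "subgroup S (omega_power_group G)"
    unfolding S truncated_block_def by (rule subgroup_vimage[OF reindex_group_hom[OF assms(1)]])
qed auto

lemma closedin_universal_subgroup:
  assumes "group G" "finite (carrier G)" "range e \<subseteq> truncation_patterns G"
  shows "closedin (omega_power_topology G) (universal_subgroup G e)"
  unfolding universal_subgroup_eq_Inter
proof (rule closedin_Inter)
  fix S assume "S \<in> range (\<lambda>k. {y \<in> carrier (omega_power_group G).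
                                 truncated_block G k (fst (e k)) y \<in> snd (e k)})"
  then obtain k where S: "S = {y \<in> topspace (omega_power_topology G).
                                 truncated_block G k (fst (e k)) y \<in> snd (e k)}"
    by (auto simp: topspace_omega_power_topology)
  have "finite (snd (e k))"
    using truncation_patternsD(2) assms(3) finite_truncation_image[OF assms(2)]
    by (meson finite_subset range_subsetD)
  moreover have "snd (e k) \<subseteq> topspace (omega_power_topology G)"
    using truncation_patternsD(1) assms(3) subgroup.subset
    by (metis range_subsetD topspace_omega_power_topology)
  ultimately have "closedin (omega_power_topology G) (snd (e k))"
    by (intro closedin_Hausdorff_finite Hausdorff_space_omega_power_topology)
  moreover have "continuous_map (omega_power_topology G) (omega_power_topology G)
                   (truncated_block G k (fst (e k)))"
    unfolding truncated_block_def using assms(1)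
    by (intro continuous_map_reindex monoid.one_closed group.is_monoid)
  ultimately show "closedin (omega_power_topology G) S"
    unfolding S by (rule closedin_continuous_map_preimage[rotated])
qed auto

definition block_embedding ::
    "('a, 'b) monoid_scheme \<Rightarrow> (nat \<Rightarrow> nat \<times> (nat \<Rightarrow> 'a) set) \<Rightarrow> (nat \<Rightarrow> 'a) set
       \<Rightarrow> (nat \<Rightarrow> 'a) \<Rightarrow> nat \<Rightarrow> 'a" where
  "block_embedding G e H = reindex \<one>\<^bsub>G\<^esub> (\<lambda>m. case prod_decode m of (k, i) \<Rightarrow>
      if snd (e k) = truncation G (fst (e k)) ` H \<and> i < fst (e k) then Some i else None)"

lemma truncated_block_block_embedding:
  "truncated_block G k (fst (e k)) (block_embedding G e H x) =
     (if snd (e k) = truncation G (fst (e k)) ` H then truncation G (fst (e k)) x else (\<lambda>_. \<one>\<^bsub>G\<^esub>))"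
  by (cases "snd (e k) = truncation G (fst (e k)) ` H")
    (simp_all add: fun_eq_iff truncated_block_apply truncation_apply block_embedding_def reindex_def)

lemma block_embedding_hom:
  "group G \<Longrightarrow> block_embedding G e H \<in> hom (omega_power_group G) (omega_power_group G)"
  unfolding block_embedding_def using reindex_group_hom group_hom.homh by blast

lemma continuous_map_block_embedding:
  "group G \<Longrightarrow>
     continuous_map (omega_power_topology G) (omega_power_topology G) (block_embedding G e H)"
  unfolding block_embedding_def by (intro continuous_map_reindex monoid.one_closed group.is_monoid)

lemma vimage_block_embedding_universal_subgroup:
  assumes "group G" "range e = truncation_patterns G"
    and H: "subgroup H (omega_power_group G)" "closedin (omega_power_topology G) H"
  shows "{x \<in> carrier (omega_power_group G). block_embedding G e H x \<in> universal_subgroup G e} = H"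
proof (intro equalityI subsetI)
  fix x assume "x \<in> {x \<in> carrier (omega_power_group G). block_embedding G e H x \<in> universal_subgroup G e}"
  then have x: "x \<in> carrier (omega_power_group G)"
    and blocks: "\<And>k. truncated_block G k (fst (e k)) (block_embedding G e H x) \<in> snd (e k)"
    by (auto simp: universal_subgroup_def)
  have "\<exists>h\<in>H. \<forall>i<n. h i = x i" for n
  proof -
    have "(n, truncation G n ` H) \<in> range e"
      using truncation_image_in_truncation_patterns[OF assms(1) H(1)] assms(2) by simp
    then obtain k where k: "e k = (n, truncation G n ` H)"
      by (metis rangeE)
    have "truncation G n x \<in> truncation G n ` H"
      using blocks[of k] truncated_block_block_embedding[of G k e H x] unfolding k by simp
    then obtain h where "h \<in> H" "truncation G n h = truncation G n x"
      by (metis imageE)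
    moreover have "h i = x i" if "i < n" for i
      using fun_cong[OF \<open>truncation G n h = truncation G n x\<close>, of i] that
      by (simp add: truncation_apply)
    ultimately show ?thesis by blast
  qed
  then show "x \<in> H"
    using omega_power_closedin_prefix_limit[OF H(2) x] by blast
next
  fix x assume x: "x \<in> H"
  have xC: "x \<in> carrier (omega_power_group G)"
    using x subgroup.subset[OF H(1)] by blast
  have "truncated_block G k (fst (e k)) (block_embedding G e H x) \<in> snd (e k)" for k
  proof (cases "snd (e k) = truncation G (fst (e k)) ` H")
    case True
    then show ?thesis
      using x by (simp add: truncated_block_block_embedding)
  next
    case False
    have "subgroup (snd (e k)) (omega_power_group G)"
      using truncation_patternsD(1) assms(2) by blast
    then have "(\<lambda>_. \<one>\<^bsub>G\<^esub>) \<in> snd (e k)"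
      using subgroup.one_closed by (fastforce simp: one_omega_power_group)
    then show ?thesis
      using False by (simp add: truncated_block_block_embedding)
  qed
  moreover have "block_embedding G e H x \<in> carrier (omega_power_group G)"
    by (rule hom_in_carrier[OF block_embedding_hom[OF assms(1)] xC])
  ultimately show "x \<in> {x \<in> carrier (omega_power_group G). block_embedding G e H x \<in> universal_subgroup G e}"
    using xC by (simp add: universal_subgroup_def)
qed

theorem mainTheorem18:
  fixes G :: "('a, 'b) monoid_scheme"
  assumes "group G" and "finite (carrier G)"
  shows "\<exists>H0. subgroup H0 (omega_power_group G) \<and> closedin (omega_power_topology G) H0 \<and>
           (\<forall>H. subgroup H (omega_power_group G) \<and> closedin (omega_power_topology G) H \<longrightarrow>
              (\<exists>\<phi>. \<phi> \<in> hom (omega_power_group G) (omega_power_group G) \<and>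
                   continuous_map (omega_power_topology G) (omega_power_topology G) \<phi> \<and>
                   {x \<in> carrier (omega_power_group G). \<phi> x \<in> H0} = H))"
proof -
  have "subgroup (carrier (omega_power_group G)) (omega_power_group G)"
    by (rule group.subgroup_self[OF group_omega_power_group[OF assms(1)]])
  then have "truncation_patterns G \<noteq> {}"
    using truncation_image_in_truncation_patterns[OF assms(1)] by blast
  then have e: "range (from_nat_into (truncation_patterns G)) = truncation_patterns G"
    using countable_truncation_patterns[OF assms(2)] by (rule range_from_nat_into)
  show ?thesis
  proof (intro exI conjI allI impI)
    let ?e = "from_nat_into (truncation_patterns G)"
    show "subgroup (universal_subgroup G ?e) (omega_power_group G)"
      using subgroup_universal_subgroup[OF assms(1)] e by simp
    show "closedin (omega_power_topology G) (universal_subgroup G ?e)"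
      using closedin_universal_subgroup[OF assms] e by simp
    fix H assume "subgroup H (omega_power_group G) \<and> closedin (omega_power_topology G) H"
    then show "{x \<in> carrier (omega_power_group G). block_embedding G ?e H x \<in> universal_subgroup G ?e} = H"
      using vimage_block_embedding_universal_subgroup[OF assms(1) e] by blast
    show "block_embedding G ?e H \<in> hom (omega_power_group G) (omega_power_group G)"
      by (rule block_embedding_hom[OF assms(1)])
    show "continuous_map (omega_power_topology G) (omega_power_topology G) (block_embedding G ?e H)"
      by (rule continuous_map_block_embedding[OF assms(1)])
  qed
qed

end
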